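(* Assume $\gamma=0$ and $L$ is not conformal. Let $M$ be a simple $L$-module; if $o(r)=n<\infty$ assume that the central element $\tilde\phi(h^n)$ acts on $M$ as a nonzero scalar. If $\operatorname{ann}M$ contains a power of $u$ or a power of $d$, then $M$ is finite-dimensional.
   Context: Let $r,s\in\mathbb C^\times$, $\phi(x)=\sum_ia_ix^i$, and $L=L(\phi,r,s,0)$ the associative $\mathbb C$-algebra generated by $u,d,h$ with $hu=ruh$, $dh=rhd$, $du-sud=\phi(h)$. $L$ is not conformal means there is no $\psi\in\mathbb C[x]$ with $s\psi(x)-\psi(rx)=\phi(x)$; equivalently $s=r^i$ and $a_i\neq0$ for some $i$. When $o(r)=n<\infty$ fix $j$ with $s=r^j$, $0\le j\le n-1$, and write $\sum_{i\equiv j\ (\mathrm{mod}\ n)}a_ih^i=sh^j\tilde\phi(h^n)$ for a polynomial $\tilde\phi$; then $h^n$ and hence $\tilde\phi(h^n)$ are central in $L$. $o(r)$ is the multiplicative order of $r$. Modules are left modules. *)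

theory Defs
  imports Main "HOL-Computational_Algebra.Polynomial"
begin

definition op_poly :: "(complex \<Rightarrow> 'm \<Rightarrow> 'm) \<Rightarrow> complex poly \<Rightarrow> ('m \<Rightarrow> 'm) \<Rightarrow> 'm \<Rightarrow> 'm::ab_group_add"
  where "op_poly scale p H x = (\<Sum>i\<le>degree p. scale (coeff p i) ((H ^^ i) x))"

text \<open>M is a module over L(phi,r,s,0): the generators u, d, h act by linear
  operators U, D, H satisfying the defining relations
  hu = r uh, dh = r hd, du - s ud = phi(h).\<close>
definition is_L_module ::
  "(complex \<Rightarrow> 'm \<Rightarrow> 'm) \<Rightarrow> complex poly \<Rightarrow> complex \<Rightarrow> complex \<Rightarrow>
     ('m \<Rightarrow> 'm) \<Rightarrow> ('m \<Rightarrow> 'm) \<Rightarrow> ('m \<Rightarrow> 'm::ab_group_add) \<Rightarrow> bool"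
  where "is_L_module scale phi r s U D H \<longleftrightarrow>
    vector_space scale \<and>
    Vector_Spaces.linear scale scale U \<and> Vector_Spaces.linear scale scale D \<and>
    Vector_Spaces.linear scale scale H \<and>
    (\<forall>x. H (U x) = scale r (U (H x))) \<and>
    (\<forall>x. D (H x) = scale r (H (D x))) \<and>
    (\<forall>x. D (U x) - scale s (U (D x)) = op_poly scale phi H x)"

definition is_simple_L_module ::
  "(complex \<Rightarrow> 'm \<Rightarrow> 'm) \<Rightarrow> complex poly \<Rightarrow> complex \<Rightarrow> complex \<Rightarrow>
     ('m \<Rightarrow> 'm) \<Rightarrow> ('m \<Rightarrow> 'm) \<Rightarrow> ('m \<Rightarrow> 'm::ab_group_add) \<Rightarrow> bool"
  where "is_simple_L_module scale phi r s U D H \<longleftrightarrow>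
    is_L_module scale phi r s U D H \<and> (UNIV :: 'm set) \<noteq> {0} \<and>
    (\<forall>W. module.subspace scale W \<and> U ` W \<subseteq> W \<and> D ` W \<subseteq> W \<and> H ` W \<subseteq> W
          \<longrightarrow> W = {0} \<or> W = UNIV)"

definition conformal :: "complex poly \<Rightarrow> complex \<Rightarrow> complex \<Rightarrow> bool"
  where "conformal phi r s \<longleftrightarrow> (\<exists>psi. smult s psi - psi \<circ>\<^sub>p [:0, r:] = phi)"

definition mult_order_is :: "complex \<Rightarrow> nat \<Rightarrow> bool"
  where "mult_order_is r n \<longleftrightarrow> 0 < n \<and> r ^ n = 1 \<and> (\<forall>m. 0 < m \<and> m < n \<longrightarrow> r ^ m \<noteq> 1)"

text \<open>phi tilde: sum over i = j mod n of a_i h^i = s h^j phitilde(h^n),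
  i.e. coeff phitilde k = a_(j+kn) / s.\<close>
definition phitilde :: "complex poly \<Rightarrow> complex \<Rightarrow> nat \<Rightarrow> nat \<Rightarrow> complex poly"
  where "phitilde phi s n j = (\<Sum>k\<le>degree phi. monom (coeff phi (j + k * n) / s) k)"

definition fin_dim :: "(complex \<Rightarrow> 'm \<Rightarrow> 'm::ab_group_add) \<Rightarrow> bool"
  where "fin_dim scale \<longleftrightarrow> (\<exists>S. finite S \<and> module.span scale S = UNIV)"

end

theory Submission
  imports Defs "HOL-Computational_Algebra.Fundamental_Theorem_Algebra"
begin

(* Non-conformality means resonance: s = r^i
   with a_i /= 0 for some i.  Commuting d past u^j gives
   d u^j = s^j u^j d + Q_j(h) u^(j-1), where resonance forces Q_j /= 0 for j > 0;
   applied to the last nonzero power of u this yields a nonzero polynomial in h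
   annihilating a vector of ker u, hence (fundamental theorem of algebra) an
   h-eigenvector v with u v = 0.  The vectors d^c v are h-eigenvectors lowered by u
   to multiples of their predecessors; nilpotency of u makes some u d^m v = 0 with
   m > 0, and simplicity applied to the submodules spanned by the tails of this
   chain shows that finitely many d^c v span M.  The case of a nilpotent d follows
   by the symmetry u <-> d, which turns L(phi,r,s,0) into L(-phi/s,1/r,1/s,0). *)

lemma linear_funpow:
  assumes "Vector_Spaces.linear scale scale f"
  shows "Vector_Spaces.linear scale scale (f ^^ n)"
proof (induction n)
  case 0
  have "vector_space scale" using assms by (simp add: Vector_Spaces.linear_iff)
  then show ?case by (simp add: Vector_Spaces.linear_iff id_def)
next
  case (Suc n)
  then show ?case using Vector_Spaces.linear_compose[OF Suc assms] by (simp add: comp_def)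
qed

context vector_space
begin

lemma span_invariant:
  assumes "Vector_Spaces.linear scale scale f" and "f ` B \<subseteq> span B"
  shows "f ` span B \<subseteq> span B"
proof -
  interpret f: Vector_Spaces.linear scale scale f by (rule assms(1))
  have "f ` span B = span (f ` B)" by (simp add: f.span_image)
  also have "\<dots> \<subseteq> span (span B)" by (rule span_mono[OF assms(2)])
  finally show ?thesis by (simp add: span_span)
qed

lemma span_tail_finite:
  fixes x :: "nat \<Rightarrow> 'b"
  assumes "y \<in> span (x ` {m..})"
  shows "\<exists>n. y \<in> span (x ` {m..<n})"
  using assms
proof (induction rule: span_induct_alt)
  case base
  show ?case by (auto intro: span_zero)
next
  case (step c z y)
  then obtain j n where j: "z = x j" "j \<ge> m" and n: "y \<in> span (x ` {m..<n})" by blast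
  define n' where "n' = max n (Suc j)"
  have "span (x ` {m..<n}) \<subseteq> span (x ` {m..<n'})" by (rule span_mono) (auto simp: n'_def)
  moreover have "z \<in> span (x ` {m..<n'})" using j by (intro span_base) (auto simp: n'_def)
  ultimately have "scale c z + y \<in> span (x ` {m..<n'})" using n by (blast intro: span_add span_scale)
  then show ?case by blast
qed

lemma independent_without_repetition:
  fixes x :: "nat \<Rightarrow> 'b"
  assumes "\<And>N. x N \<notin> span (x ` {..<N})"
  shows "independent (x ` {..<n})"
proof (induction n)
  case (Suc n)
  have "x ` {..<Suc n} = insert (x n) (x ` {..<n})" by (simp add: lessThan_Suc)
  then show ?case using Suc assms by (simp add: independent_insertI)
qed (simp add: independent_empty)

lemma first_dependence:
  fixes x :: "nat \<Rightarrow> 'b"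
  assumes "x 0 \<in> span (x ` {1..<n})"
  shows "\<exists>N. x N \<in> span (x ` {..<N})"
proof (rule ccontr)
  assume new: "\<nexists>N. x N \<in> span (x ` {..<N})"
  have inj: "x i \<noteq> x j" if "i < j" for i j
  proof
    assume "x i = x j"
    then have "x j \<in> x ` {..<j}" using that by (metis imageI lessThan_iff)
    then have "x j \<in> span (x ` {..<j})" by (rule span_base)
    then show False using new by blast
  qed
  have "x 0 \<notin> span (x ` {..<0})" using new by blast
  then have "x 0 \<noteq> 0" by simp
  then have "0 < n" using assms by (cases n) auto
  have sub: "x ` {1..<n} \<subseteq> x ` {..<n} - {x 0}"
  proof
    fix y assume "y \<in> x ` {1..<n}"
    then obtain i where "i \<in> {1..<n}" "y = x i" by blast
    then show "y \<in> x ` {..<n} - {x 0}" using inj[of 0 i] by auto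
  qed
  have "x 0 \<in> span (x ` {..<n} - {x 0})" using assms span_mono[OF sub] by blast
  moreover have "x 0 \<in> x ` {..<n}" using \<open>0 < n\<close> by blast
  ultimately have "dependent (x ` {..<n})" unfolding dependent_def by blast
  moreover have "\<And>N. x N \<notin> span (x ` {..<N})" using new by blast
  ultimately show False using independent_without_repetition[of x n] by blast
qed

lemma orbit_in_span:
  assumes "Vector_Spaces.linear scale scale f"
    and "(f ^^ N) v \<in> span ((\<lambda>c. (f ^^ c) v) ` {..<N})"
  shows "(f ^^ c) v \<in> span ((\<lambda>c. (f ^^ c) v) ` {..<N})"
proof -
  let ?V = "span ((\<lambda>c. (f ^^ c) v) ` {..<N})"
  have "f ` ?V \<subseteq> ?V"
  proof (rule span_invariant[OF assms(1)], rule image_subsetI)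
    fix y assume "y \<in> (\<lambda>c. (f ^^ c) v) ` {..<N}"
    then obtain c where c: "c < N" "y = (f ^^ c) v" by blast
    show "f y \<in> ?V"
    proof (cases "Suc c = N")
      case True
      then have "f y = (f ^^ N) v" using c(2) by auto
      then show ?thesis using assms(2) by simp
    next
      case False
      then have "f y \<in> (\<lambda>c. (f ^^ c) v) ` {..<N}"
        using c by (intro image_eqI[of _ _ "Suc c"]) auto
      then show ?thesis by (rule span_base)
    qed
  qed
  show ?thesis
  proof (cases "N = 0")
    case True
    then have "v = 0" using assms(2) by simp
    interpret fc: Vector_Spaces.linear scale scale "f ^^ c" by (rule linear_funpow[OF assms(1)])
    show ?thesis using \<open>v = 0\<close> by (simp add: span_zero)
  next
    case False
    show ?thesis
    proof (induction c)
      case 0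
      have "(f ^^ 0) v \<in> (\<lambda>c. (f ^^ c) v) ` {..<N}" using False by blast
      then show ?case by (simp add: span_base)
    next
      case (Suc c) then show ?case using \<open>f ` ?V \<subseteq> ?V\<close> by auto
    qed
  qed
qed

end

locale h_module = vector_space scale for scale :: "complex \<Rightarrow> 'm::ab_group_add \<Rightarrow> 'm" +
  fixes H :: "'m \<Rightarrow> 'm"
  assumes linear_H: "Vector_Spaces.linear scale scale H"
begin

interpretation H: Vector_Spaces.linear scale scale H by (rule linear_H)

lemma op_poly_upto:
  assumes "degree p \<le> N"
  shows "op_poly scale p H x = (\<Sum>i\<le>N. scale (coeff p i) ((H ^^ i) x))"
  unfolding op_poly_def
  by (rule sum.mono_neutral_left) (use assms in \<open>auto simp: coeff_eq_0\<close>)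

lemma op_poly_add: "op_poly scale (p + q) H x = op_poly scale p H x + op_poly scale q H x"
proof -
  define N where "N = max (degree p) (degree q)"
  have "degree (p + q) \<le> N" unfolding N_def by (rule degree_add_le_max)
  then have "op_poly scale (p + q) H x
      = (\<Sum>i\<le>N. scale (coeff p i) ((H ^^ i) x)) + (\<Sum>i\<le>N. scale (coeff q i) ((H ^^ i) x))"
    by (simp add: op_poly_upto scale_left_distrib sum.distrib)
  also have "\<dots> = op_poly scale p H x + op_poly scale q H x"
    by (simp add: op_poly_upto[of p N] op_poly_upto[of q N] N_def)
  finally show ?thesis .
qed

lemma op_poly_smult: "op_poly scale (smult c p) H x = scale c (op_poly scale p H x)"
  using op_poly_upto[of "smult c p" "degree p"]
  by (simp add: degree_smult_le op_poly_def scale_sum_right)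

lemma op_poly_eigenvector:
  assumes "H x = scale \<mu> x"
  shows "op_poly scale p H x = scale (poly p \<mu>) x"
proof -
  have "(H ^^ i) x = scale (\<mu> ^ i) x" for i
    by (induction i) (simp_all add: assms(1) H.scale mult.commute)
  then show ?thesis
    by (simp add: op_poly_def poly_altdef scale_sum_left)
qed

lemma funpow_twisted_commute:
  assumes "\<And>x. f (H x) = scale c (H (f x))"
  shows "f ((H ^^ i) x) = scale (c ^ i) ((H ^^ i) (f x))"
proof (induction i)
  case (Suc i)
  show ?case using Suc by (simp add: assms H.scale mult.commute)
qed simp

lemma op_poly_twisted_commute:
  assumes "\<And>x. f (H x) = scale c (H (f x))" and "Vector_Spaces.linear scale scale f"
  shows "f (op_poly scale p H x) = op_poly scale (p \<circ>\<^sub>p [:0, c:]) H (f x)"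
proof -
  interpret f: Vector_Spaces.linear scale scale f by (rule assms(2))
  have "degree (p \<circ>\<^sub>p [:0, c:]) \<le> degree p"
    using degree_pcompose_le[of p "[:0, c:]"] by (simp add: degree_pCons_le order_trans)
  then have "op_poly scale (p \<circ>\<^sub>p [:0, c:]) H (f x)
      = (\<Sum>i\<le>degree p. scale (c ^ i * coeff p i) ((H ^^ i) (f x)))"
    by (simp add: op_poly_upto coeff_pcompose_linear)
  also have "\<dots> = f (op_poly scale p H x)"
    by (simp add: op_poly_def f.sum f.scale funpow_twisted_commute[of f c, OF assms(1)] mult.commute)
  finally show ?thesis by simp
qed

lemma op_poly_linear_factor:
  "op_poly scale ([:-z, 1:] * q) H x = H (op_poly scale q H x) - scale z (op_poly scale q H x)"
proof -
  have "op_poly scale (pCons 0 q) H x = (\<Sum>i\<le>Suc (degree q). scale (coeff (pCons 0 q) i) ((H ^^ i) x))"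
    by (rule op_poly_upto) (simp add: degree_pCons_le)
  also have "\<dots> = H (op_poly scale q H x)"
    by (simp add: sum.atMost_Suc_shift op_poly_def H.sum H.scale del: sum.atMost_Suc)
  finally have shift: "op_poly scale (pCons 0 q) H x = H (op_poly scale q H x)" .
  have factor: "[:-z, 1:] * q = pCons 0 q + smult (-z) q" by simp
  show ?thesis
    unfolding factor op_poly_add op_poly_smult shift by simp
qed

lemma op_poly_in_invariant_subspace:
  assumes "subspace K" and "H ` K \<subseteq> K" and "w \<in> K"
  shows "op_poly scale p H w \<in> K"
proof -
  have "(H ^^ i) w \<in> K" for i
    by (induction i) (use assms in auto)
  then show ?thesis
    unfolding op_poly_def using assms(1) by (intro subspace_sum subspace_scale) auto
qed

(* If a nonzero polynomial annihilates a nonzero vector of an H-invariant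
   subspace K, then H has an eigenvector in K: factor off roots given by the
   fundamental theorem of algebra until the first factor kills the vector. *)
lemma eigenvector_in_invariant_subspace:
  assumes "subspace K" and "H ` K \<subseteq> K" and "w \<in> K" and "w \<noteq> 0"
    and "p \<noteq> 0" and "op_poly scale p H w = 0"
  shows "\<exists>v \<mu>. v \<in> K \<and> v \<noteq> 0 \<and> H v = scale \<mu> v"
  using assms(3-6)
proof (induction "degree p" arbitrary: p w rule: less_induct)
  case less
  show ?case
  proof (cases "degree p = 0")
    case True
    then obtain c where "p = [:c:]" by (metis degree_eq_zeroE)
    then have "op_poly scale p H w = scale c w" by (simp add: op_poly_def)
    then show ?thesis using less.prems \<open>p = [:c:]\<close> by simp
  next
    case False
    then obtain z where "poly p z = 0"
      by (metis fundamental_theorem_of_algebra constant_degree)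
    then obtain q where pq: "p = [:-z, 1:] * q"
      by (metis dvdE poly_eq_0_iff_dvd)
    with less.prems have "q \<noteq> 0" by auto
    then have deg: "degree q < degree p" unfolding pq by (subst degree_mult_eq) auto
    define w' where "w' = op_poly scale q H w"
    have "w' \<in> K" unfolding w'_def
      by (rule op_poly_in_invariant_subspace[OF assms(1,2) less.prems(1)])
    show ?thesis
    proof (cases "w' = 0")
      case True
      then show ?thesis
        using less.hyps[OF deg less.prems(1,2) \<open>q \<noteq> 0\<close>] unfolding w'_def by blast
    next
      case False
      have "H w' - scale z w' = 0"
        using less.prems(4) unfolding pq op_poly_linear_factor w'_def .
      then show ?thesis using False \<open>w' \<in> K\<close> by auto
    qed
  qed
qed

end

(* The obstruction to conformality: some index i with s = r^i and a_i /= 0. *)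
definition resonant :: "complex poly \<Rightarrow> complex \<Rightarrow> complex \<Rightarrow> bool"
  where "resonant phi r s \<longleftrightarrow> (\<exists>i. s = r ^ i \<and> coeff phi i \<noteq> 0)"

(* Without resonance, psi = sum a_i/(s - r^i) h^i solves s psi(x) - psi(rx) = phi(x). *)
lemma not_conformal_imp_resonant:
  assumes "\<not> conformal phi r s"
  shows "resonant phi r s"
proof (rule ccontr)
  assume nonres: "\<not> resonant phi r s"
  define psi where "psi = (\<Sum>i\<le>degree phi. monom (coeff phi i / (s - r ^ i)) i)"
  have coeff_psi: "coeff psi i = (if i \<le> degree phi then coeff phi i / (s - r ^ i) else 0)" for i
    unfolding psi_def by (simp add: coeff_sum coeff_monom)
  have "coeff (smult s psi - psi \<circ>\<^sub>p [:0, r:]) i = coeff phi i" for i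
  proof -
    have "coeff (smult s psi - psi \<circ>\<^sub>p [:0, r:]) i = (s - r ^ i) * coeff psi i"
      by (simp add: coeff_pcompose_linear left_diff_distrib)
    also have "\<dots> = coeff phi i"
      using nonres by (auto simp: coeff_psi resonant_def coeff_eq_0)
    finally show ?thesis .
  qed
  then have "smult s psi - psi \<circ>\<^sub>p [:0, r:] = phi" by (rule poly_eqI)
  then show False using assms unfolding conformal_def by blast
qed

lemma resonant_swap:
  assumes "s \<noteq> 0" and "resonant phi r s"
  shows "resonant (smult (- inverse s) phi) (inverse r) (inverse s)"
  using assms by (auto simp: resonant_def power_inverse)

locale L_module = h_module scale H
  for scale :: "complex \<Rightarrow> 'm::ab_group_add \<Rightarrow> 'm" and phi :: "complex poly"
    and r s :: complex and U D H :: "'m \<Rightarrow> 'm" +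
  assumes linear_U: "Vector_Spaces.linear scale scale U"
    and linear_D: "Vector_Spaces.linear scale scale D"
    and H_U: "\<And>x. H (U x) = scale r (U (H x))"
    and D_H: "\<And>x. D (H x) = scale r (H (D x))"
    and D_U: "\<And>x. D (U x) = scale s (U (D x)) + op_poly scale phi H x"
    and r_nonzero: "r \<noteq> 0" and s_nonzero: "s \<noteq> 0"

lemma L_module_of_is_L_module:
  assumes "is_L_module scale phi r s U D H" and "r \<noteq> 0" and "s \<noteq> 0"
  shows "L_module scale phi r s U D H"
  using assms unfolding is_L_module_def L_module_def L_module_axioms_def h_module_def h_module_axioms_def
  by (auto simp: algebra_simps)

context L_module
begin

interpretation U: Vector_Spaces.linear scale scale U by (rule linear_U)
interpretation D: Vector_Spaces.linear scale scale D by (rule linear_D)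
interpretation H: Vector_Spaces.linear scale scale H by (rule linear_H)

(* Exchanging the roles of u and d gives a module over
   L(-phi/s, 1/r, 1/s, 0); this reduces the case "d nilpotent" to "u nilpotent". *)
lemma swap: "L_module scale (smult (- inverse s) phi) (inverse r) (inverse s) D U H"
proof unfold_locales
  show "U (D x) = scale (inverse s) (D (U x)) + op_poly scale (smult (- inverse s) phi) H x" for x
  proof -
    have "op_poly scale (smult (- inverse s) phi) H x = scale (- inverse s) (op_poly scale phi H x)"
      by (rule op_poly_smult)
    then show ?thesis
      using D_U[of x] s_nonzero by (simp add: scale_right_distrib)
  qed
qed (use r_nonzero s_nonzero D_H H_U linear_U linear_D in auto)

definition submodule :: "'m set \<Rightarrow> bool"
  where "submodule W \<longleftrightarrow> subspace W \<and> U ` W \<subseteq> W \<and> D ` W \<subseteq> W \<and> H ` W \<subseteq> W"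

lemma U_H: "U (H x) = scale (inverse r) (H (U x))"
  using H_U[of x] r_nonzero by simp

lemma U_op_poly: "U (op_poly scale p H x) = op_poly scale (p \<circ>\<^sub>p [:0, inverse r:]) H (U x)"
  by (rule op_poly_twisted_commute[OF U_H linear_U])

(* The polynomials Q_j with d u^j = s^j u^j d + Q_j(h) u^(j-1), obtained by
   commuting d past u one factor at a time. *)
primrec comm_poly :: "nat \<Rightarrow> complex poly" where
  "comm_poly 0 = 0"
| "comm_poly (Suc j) = smult s (comm_poly j \<circ>\<^sub>p [:0, inverse r:]) + phi"

lemma D_U_pow:
  "D ((U ^^ Suc j) z) = scale (s ^ Suc j) ((U ^^ Suc j) (D z)) + op_poly scale (comm_poly (Suc j)) H ((U ^^ j) z)"
proof (induction j)
  case 0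
  show ?case by (simp add: D_U)
next
  case (Suc j)
  let ?Q = "comm_poly (Suc j)"
  have "D ((U ^^ Suc (Suc j)) z) = scale s (U (D ((U ^^ Suc j) z))) + op_poly scale phi H ((U ^^ Suc j) z)"
    by (simp add: D_U)
  also have "U (D ((U ^^ Suc j) z))
      = scale (s ^ Suc j) ((U ^^ Suc (Suc j)) (D z)) + op_poly scale (?Q \<circ>\<^sub>p [:0, inverse r:]) H ((U ^^ Suc j) z)"
    using Suc by (simp add: U.add U.scale U_op_poly)
  finally show ?case
    by (simp add: op_poly_add op_poly_smult scale_right_distrib add.assoc)
qed

(* At a resonant index the coefficient of Q_j is j a_i; so Q_j /= 0 for j > 0. *)
lemma coeff_comm_poly_resonant:
  assumes "s = r ^ i"
  shows "coeff (comm_poly j) i = of_nat j * coeff phi i"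
proof (induction j)
  case (Suc j)
  have "s * inverse r ^ i = 1" using assms r_nonzero by (simp add: power_inverse)
  then show ?case using Suc by (simp add: coeff_pcompose_linear algebra_simps)
qed simp

lemma U_kernel_H_invariant: "U x = 0 \<Longrightarrow> U (H x) = 0"
  using U_H[of x] by simp

(* If u is nilpotent, take w = u^(j) z /= 0 with u w = 0 and u^(j+1) = 0.  Then
   0 = d u^(j+1) z = Q_(j+1)(h) w, and Q_(j+1) /= 0 by resonance, so the kernel of u
   (which is h-invariant) contains an h-eigenvector. *)
lemma highest_weight_vector:
  assumes "resonant phi r s" and nil: "\<forall>x. (U ^^ k) x = 0" and nontrivial: "(UNIV :: 'm set) \<noteq> {0}"
  shows "\<exists>v \<mu>. v \<noteq> 0 \<and> U v = 0 \<and> H v = scale \<mu> v"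
proof -
  define k0 where "k0 = (LEAST k. \<forall>x. (U ^^ k) x = 0)"
  have k0: "\<forall>x. (U ^^ k0) x = 0" unfolding k0_def using nil by (rule LeastI)
  have "k0 \<noteq> 0" using k0 nontrivial by auto
  then obtain j where j: "k0 = Suc j" by (cases k0) auto
  have "\<not> (\<forall>x. (U ^^ j) x = 0)" using not_less_Least[of j "\<lambda>k. \<forall>x. (U ^^ k) x = 0"] j k0_def by auto
  then obtain z where w: "(U ^^ j) z \<noteq> 0" by auto
  let ?w = "(U ^^ j) z"
  have "U ?w = 0" using k0 j by simp
  have "op_poly scale (comm_poly k0) H ?w = 0"
    using D_U_pow[of j z] k0 j by (simp add: D.zero)
  moreover obtain i where i: "s = r ^ i" "coeff phi i \<noteq> 0" using assms(1) by (auto simp: resonant_def)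
  then have "comm_poly k0 \<noteq> 0" using \<open>k0 \<noteq> 0\<close> by (metis coeff_0 coeff_comm_poly_resonant mult_eq_0_iff of_nat_eq_0_iff)
  moreover have "subspace {x. U x = 0}" by (rule U.subspace_kernel)
  moreover have "H ` {x. U x = 0} \<subseteq> {x. U x = 0}" using U_kernel_H_invariant by auto
  ultimately show ?thesis
    using eigenvector_in_invariant_subspace[of "{x. U x = 0}" ?w] w \<open>U ?w = 0\<close> by blast
qed

end

locale highest_weight = L_module +
  fixes v and \<mu> :: complex
  assumes v_nonzero: "v \<noteq> 0" and U_v: "U v = 0" and H_v: "H v = scale \<mu> v"
begin

interpretation D: Vector_Spaces.linear scale scale D by (rule linear_D)

definition chain where "chain c = (D ^^ c) v"

(* The h-eigenvalue of chain c, and the coefficients with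
   u (chain (c+1)) = lowering c * chain c. *)
definition weight :: "nat \<Rightarrow> complex" where "weight c = \<mu> * inverse r ^ c"

primrec lowering :: "nat \<Rightarrow> complex" where
  "lowering 0 = - inverse s * poly phi \<mu>"
| "lowering (Suc c) = inverse s * (lowering c - poly phi (weight (Suc c)))"

lemma chain_Suc: "chain (Suc c) = D (chain c)"
  by (simp add: chain_def)

lemma H_chain: "H (chain c) = scale (weight c) (chain c)"
proof (induction c)
  case 0
  show ?case by (simp add: chain_def weight_def H_v)
next
  case (Suc c)
  have "H (D x) = scale (inverse r) (D (H x))" for x
    using D_H[of x] r_nonzero by simp
  then show ?case
    using Suc r_nonzero by (simp add: chain_Suc D.scale weight_def mult.commute mult.left_commute)
qed

lemma U_D: "U (D x) = scale (inverse s) (D (U x) - op_poly scale phi H x)"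
  using D_U[of x] s_nonzero by (simp add: scale_right_diff_distrib)

lemma U_chain: "U (chain (Suc c)) = scale (lowering c) (chain c)"
proof (induction c)
  case 0
  show ?case
    by (simp add: chain_def U_D U_v D.zero op_poly_eigenvector[OF H_v] weight_def scale_minus_left)
next
  case (Suc c)
  show ?case
    unfolding chain_Suc[of "Suc c"] U_D Suc op_poly_eigenvector[OF H_chain]
    by (simp add: D.scale chain_Suc scale_left_diff_distrib[symmetric])
qed

lemma U_pow_chain: "(U ^^ j) (chain j) = scale (\<Prod>c<j. lowering c) v"
proof (induction j)
  case 0
  show ?case by (simp add: chain_def)
next
  case (Suc j)
  have "(U ^^ Suc j) (chain (Suc j)) = (U ^^ j) (scale (lowering j) (chain j))"
    by (simp add: funpow_Suc_right U_chain del: funpow.simps)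
  also have "\<dots> = scale (\<Prod>c<Suc j. lowering c) v"
    using Suc linear_funpow[OF linear_U, of j]
    by (simp add: Vector_Spaces.linear_iff mult.commute)
  finally show ?case .
qed

(* If u is nilpotent, some lowering coefficient vanishes, so u kills a later
   chain vector. *)
lemma chain_killed:
  assumes "\<forall>x. (U ^^ k) x = 0"
  shows "\<exists>m>0. U (chain m) = 0"
proof -
  have "scale (\<Prod>c<k. lowering c) v = 0" using U_pow_chain[of k] assms by simp
  then obtain c where "lowering c = 0" using v_nonzero by auto
  then show ?thesis using U_chain[of c] by (intro exI[of _ "Suc c"]) simp
qed

lemma tail_submodule:
  assumes "U (chain m) = 0"
  shows "submodule (span (chain ` {m..}))"
  unfolding submodule_def
proof (intro conjI)
  let ?T = "chain ` {m..}"
  show "subspace (span ?T)" by simp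
  show "U ` span ?T \<subseteq> span ?T"
  proof (rule span_invariant[OF linear_U], rule image_subsetI)
    fix x assume "x \<in> ?T"
    then obtain c where c: "c \<ge> m" "x = chain c" by blast
    show "U x \<in> span ?T"
    proof (cases "c = m")
      case True
      then show ?thesis using assms c by (simp add: span_zero)
    next
      case False
      then obtain c' where "c = Suc c'" "c' \<ge> m" using c(1) by (cases c) auto
      then have "U x = scale (lowering c') (chain c')" and "chain c' \<in> ?T"
        using c(2) by (auto simp: U_chain)
      then show ?thesis by (simp add: span_base span_scale)
    qed
  qed
  show "D ` span ?T \<subseteq> span ?T"
    by (rule span_invariant[OF linear_D]) (auto simp: chain_Suc[symmetric] intro!: span_base)
  show "H ` span ?T \<subseteq> span ?T"
  proof (rule span_invariant[OF linear_H], rule image_subsetI)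
    fix x assume "x \<in> ?T"
    then have "scale (weight c) x \<in> span ?T" for c by (intro span_scale span_base)
    then show "H x \<in> span ?T" using \<open>x \<in> ?T\<close> by (auto simp: H_chain)
  qed
qed

lemma chain_spans:
  assumes simple: "\<forall>W. submodule W \<longrightarrow> W = {0} \<or> W = UNIV"
  shows "span (chain ` {0..}) = UNIV"
proof -
  have "chain 0 = v" by (simp add: chain_def)
  have "v \<in> span (chain ` {0..})"
    by (rule span_base, rule image_eqI[of _ _ 0]) (simp_all add: \<open>chain 0 = v\<close>)
  then have "span (chain ` {0..}) \<noteq> {0}" using v_nonzero by auto
  moreover have "submodule (span (chain ` {0..}))"
    using tail_submodule[of 0] U_v \<open>chain 0 = v\<close> by simp
  then have "span (chain ` {0..}) = {0} \<or> span (chain ` {0..}) = UNIV"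
    by (rule simple[rule_format])
  ultimately show ?thesis by blast
qed

(* In a simple module, the tail starting at a chain vector killed by u (other
   than v) is 0 or everything; either way some chain vector depends on its
   predecessors. *)
lemma chain_dependent:
  assumes simple: "\<forall>W. submodule W \<longrightarrow> W = {0} \<or> W = UNIV"
    and "m > 0" and "U (chain m) = 0"
  shows "\<exists>N. chain N \<in> span (chain ` {..<N})"
proof (cases "span (chain ` {m..}) = {0}")
  case True
  then have "chain m = 0" using span_base[of "chain m" "chain ` {m..}"] by auto
  then show ?thesis by (intro exI[of _ m]) (simp add: span_zero)
next
  case False
  moreover have "span (chain ` {m..}) = {0} \<or> span (chain ` {m..}) = UNIV"
    by (rule simple[rule_format, OF tail_submodule[OF assms(3)]])
  ultimately have "span (chain ` {m..}) = UNIV" by blast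
  then obtain n where "chain 0 \<in> span (chain ` {m..<n})"
    using span_tail_finite[of "chain 0" chain m] by blast
  moreover have "span (chain ` {m..<n}) \<subseteq> span (chain ` {1..<n})"
    using \<open>m > 0\<close> by (intro span_mono) auto
  ultimately show ?thesis using first_dependence[of chain n] by blast
qed

lemma finite_dimensional:
  assumes simple: "\<forall>W. submodule W \<longrightarrow> W = {0} \<or> W = UNIV"
    and nil: "\<forall>x. (U ^^ k) x = 0"
  shows "fin_dim scale"
proof -
  obtain m where "m > 0" and "U (chain m) = 0" using chain_killed[OF nil] by blast
  then obtain N where N: "chain N \<in> span (chain ` {..<N})"
    using chain_dependent[OF simple] by blast
  have chain_eq: "chain = (\<lambda>c. (D ^^ c) v)" by (simp add: chain_def fun_eq_iff)
  have "chain c \<in> span (chain ` {..<N})" for c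
    using orbit_in_span[OF linear_D, of N v c] N unfolding chain_eq .
  then have "span (chain ` {0..}) \<subseteq> span (chain ` {..<N})"
    by (intro span_minimal) auto
  then show ?thesis unfolding fin_dim_def using chain_spans[OF simple] by auto
qed

end

context L_module
begin

lemma nilpotent_U_imp_fin_dim:
  assumes "resonant phi r s" and "(UNIV :: 'm set) \<noteq> {0}"
    and "\<forall>W. submodule W \<longrightarrow> W = {0} \<or> W = UNIV" and "\<forall>x. (U ^^ k) x = 0"
  shows "fin_dim scale"
proof -
  obtain v \<mu> where "v \<noteq> 0" "U v = 0" "H v = scale \<mu> v"
    using highest_weight_vector[OF assms(1,4,2)] by blast
  then interpret highest_weight scale phi r s U D H v \<mu>
    by unfold_locales
  show ?thesis by (rule finite_dimensional[OF assms(3,4)])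
qed

end

(* The main theorem. *)
theorem mainTheorem19:
  fixes scale :: "complex \<Rightarrow> 'm \<Rightarrow> 'm::ab_group_add"
    and phi :: "complex poly" and r s :: complex
    and U D H :: "'m \<Rightarrow> 'm"
  assumes "r \<noteq> 0" and "s \<noteq> 0"
    and "\<not> conformal phi r s"
    and "is_simple_L_module scale phi r s U D H"
    and "\<forall>n j. mult_order_is r n \<and> j < n \<and> s = r ^ j \<longrightarrow>
           (\<exists>c. c \<noteq> 0 \<and> (\<forall>x. op_poly scale (phitilde phi s n j) (H ^^ n) x = scale c x))"
    and "(\<exists>k. \<forall>x. (U ^^ k) x = 0) \<or> (\<exists>k. \<forall>x. (D ^^ k) x = 0)"
  shows "fin_dim scale"
proof -
  have module: "is_L_module scale phi r s U D H" and nontrivial: "(UNIV :: 'm set) \<noteq> {0}"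
    and simple: "\<And>W. module.subspace scale W \<Longrightarrow> U ` W \<subseteq> W \<Longrightarrow> D ` W \<subseteq> W \<Longrightarrow> H ` W \<subseteq> W
      \<Longrightarrow> W = {0} \<or> W = UNIV"
    using assms(4) unfolding is_simple_L_module_def by blast+
  interpret M: L_module scale phi r s U D H
    by (rule L_module_of_is_L_module[OF module assms(1,2)])
  interpret S: L_module scale "smult (- inverse s) phi" "inverse r" "inverse s" D U H
    by (rule M.swap)
  have resonant: "resonant phi r s" by (rule not_conformal_imp_resonant[OF assms(3)])
  have simple_M: "\<forall>W. M.submodule W \<longrightarrow> W = {0} \<or> W = UNIV"
    and simple_S: "\<forall>W. S.submodule W \<longrightarrow> W = {0} \<or> W = UNIV"
    unfolding M.submodule_def S.submodule_def using simple by auto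
  from assms(6) show ?thesis
  proof
    assume "\<exists>k. \<forall>x. (U ^^ k) x = 0"
    then obtain k where "\<forall>x. (U ^^ k) x = 0" by blast
    then show ?thesis by (rule M.nilpotent_U_imp_fin_dim[OF resonant nontrivial simple_M])
  next
    assume "\<exists>k. \<forall>x. (D ^^ k) x = 0"
    then obtain k where "\<forall>x. (D ^^ k) x = 0" by blast
    then show ?thesis
      by (rule S.nilpotent_U_imp_fin_dim[OF resonant_swap[OF assms(2) resonant] nontrivial simple_S])
  qed
qed

end
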